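(* Assume every vertex of $T$ has at least two successors and that $\nu$ is a doubling measure on $(\partial T,\rho)$. Let $\alpha>0$ and $\delta>0$, and let $K:T\times\partial T\to\mathbb C$ satisfy $$|K(x,\omega)|\le\frac{m_\nu(x)^\alpha}{m_\nu(\omega\wedge x)^{\alpha+1}}\min\Big\{\frac{1}{m_\nu(\omega\wedge x)},\,m_\nu(\omega\wedge x)\Big\}^{1+\delta}\qquad\forall x\in T,\ \omega\in\partial T.$$ Then $K$ satisfies (A3) with exponent $\alpha$, there is $C<\infty$ (depending on $\alpha,\delta$ and $\nu$ but not on $\omega$) with $\sum_{x\in T}|K(x,\omega)|m_\nu(x)\le C$ for all $\omega\in\partial T$ (so (A2) holds), and for every $x\in T$ the function $\omega\mapsto K(x,\omega)$ is $\nu$-integrable on $\partial T$. Moreover, there exist kernels $K$ satisfying this bound which also satisfy $\int_{\partial T}K(x,\omega)\,d\nu(\omega)=0$ for all $x\in T$; hence such kernels define operators in the class $\mathcal O$.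
   Context: Let $T$ be a tree, identified with its vertex set, with graph distance $d$; $x\sim y$ means $d(x,y)=1$. Let $\Omega$ be the boundary (space of ends) of $T$; fix $\omega_*\in\Omega$ and set $\partial T=\Omega\setminus\{\omega_*\}$. For $x\in T$, $[x,\omega_* )$ is the geodesic ray from $x$ to $\omega_*$; for $\omega\in\partial T$, $(\omega,\omega_* )$ is the doubly infinite geodesic joining $\omega$ and $\omega_*$. For $y\in T$ write $x\le y$ if either $x\in T$ and $y\in[x,\omega_* )$, or $x\in\partial T$ and $y\in(x,\omega_* )$. Fix $o\in T$ and let $(x_j)_{j\ge0}$ enumerate $[o,\omega_* )$ with $x_0=o$, $x_j\sim x_{j+1}$; the level is $\ell(x)=\lim_{j\to\infty}(j-d(x,x_j))$. Successors: $s(x)=\{y\sim x:\ell(y)=\ell(x)-1\}$. The confluent $\eta\wedge\zeta$ of $\eta,\zeta\in T\cup\partial T$ is the vertex of minimal level among $x\in T$ with $\eta\le x$, $\zeta\le x$. $\partial T_x=\{\omega\in\partial T:\omega\le x\}$. Gromov distance: $\rho(\eta,\xi)=e^{\ell(\eta\wedge\xi)}$ for $\eta\ne\xi$, $\rho(\eta,\eta)=0$. $\nu$ is a positive Borel measure on $\partial T$ with $0<\nu(\partial T_x)<\infty$; doubling means $\nu(B_\rho(\omega,2r))\le C\nu(B_\rho(\omega,r))$ for all $\omega,r$. $m_\nu(x)=\nu(\partial T_x)$. The class $\mathcal O$ consists of integral operators $\mathcal Kg(x)=\int_{\partial T}K(x,\omega)g(\omega)\,d\nu(\omega)$ whose kernel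 $K:T\times\partial T\to\mathbb C$ satisfies: (A1) for every $x_0\in T$, $\omega\mapsto K(x_0,\omega)$ is $\nu$-integrable and $\int_{\partial T}K(x_0,\omega)\,d\nu(\omega)=0$; (A2) $C_K:=\operatorname{ess\,sup}_{\omega\in\partial T}\sum_{x\in T}|K(x,\omega)|m_\nu(x)<\infty$; (A3) there is $\alpha>0$ with $|K(x,\omega)|\le m_\nu(x)^\alpha/m_\nu(x\wedge\omega)^{\alpha+1}$ for all $x\in T$, $\omega\in\partial T$. *)

theory Defs
  imports "HOL-Analysis.Analysis"
begin

text \<open>A tree with a distinguished end \<open>\<omega>_*\<close> is encoded by its "parent" map:
  \<open>par x\<close> is the neighbour of \<open>x\<close> on the ray \<open>[x,\<omega>_*)\<close>. The vertex set is the whole type.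
  Adjacency is \<open>x \<sim> y \<longleftrightarrow> par x = y \<or> par y = x\<close>.\<close>

definition tree_with_end :: "('v \<Rightarrow> 'v) \<Rightarrow> bool" where
  "tree_with_end par \<longleftrightarrow>
     (\<forall>x y. \<exists>m n. (par ^^ m) x = (par ^^ n) y) \<and>
     (\<forall>x n. (par ^^ n) x = x \<longrightarrow> n = 0)"

definition above :: "('v \<Rightarrow> 'v) \<Rightarrow> 'v \<Rightarrow> 'v set" where
  "above par x = {(par ^^ n) x | n. True}"

definition successors :: "('v \<Rightarrow> 'v) \<Rightarrow> 'v \<Rightarrow> 'v set" where
  "successors par x = {y. par y = x}"

text \<open>Level w.r.t. base point \<open>r0\<close> (the vertex \<open>o\<close> of the paper).\<close>
definition level :: "('v \<Rightarrow> 'v) \<Rightarrow> 'v \<Rightarrow> 'v \<Rightarrow> int" where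
  "level par r0 x = (THE k. \<exists>m n. (par ^^ m) x = (par ^^ n) r0 \<and> k = int n - int m)"

text \<open>A boundary point \<open>\<omega> \<in> \<partial>T\<close> is represented by the doubly infinite geodesic
  \<open>(\<omega>,\<omega>_*)\<close>, listed by level: \<open>\<omega> k\<close> is its vertex at level \<open>k\<close>.\<close>
definition bdry :: "('v \<Rightarrow> 'v) \<Rightarrow> 'v \<Rightarrow> (int \<Rightarrow> 'v) set" where
  "bdry par r0 = {\<omega>. \<forall>k. level par r0 (\<omega> k) = k \<and> par (\<omega> k) = \<omega> (k + 1)}"

definition conf :: "('v \<Rightarrow> 'v) \<Rightarrow> 'v \<Rightarrow> 'v set \<Rightarrow> 'v set \<Rightarrow> 'v" where
  "conf par r0 U V = (THE y. y \<in> U \<inter> V \<and> (\<forall>z \<in> U \<inter> V. level par r0 y \<le> level par r0 z))"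

definition conf_vb :: "('v \<Rightarrow> 'v) \<Rightarrow> 'v \<Rightarrow> 'v \<Rightarrow> (int \<Rightarrow> 'v) \<Rightarrow> 'v" where
  "conf_vb par r0 x \<omega> = conf par r0 (above par x) (range \<omega>)"

definition conf_bb :: "('v \<Rightarrow> 'v) \<Rightarrow> 'v \<Rightarrow> (int \<Rightarrow> 'v) \<Rightarrow> (int \<Rightarrow> 'v) \<Rightarrow> 'v" where
  "conf_bb par r0 \<omega> \<xi> = conf par r0 (range \<omega>) (range \<xi>)"

definition gromov :: "('v \<Rightarrow> 'v) \<Rightarrow> 'v \<Rightarrow> (int \<Rightarrow> 'v) \<Rightarrow> (int \<Rightarrow> 'v) \<Rightarrow> real" where
  "gromov par r0 \<omega> \<xi> = (if \<omega> = \<xi> then 0 else exp (real_of_int (level par r0 (conf_bb par r0 \<omega> \<xi>))))"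

definition rho_ball :: "('v \<Rightarrow> 'v) \<Rightarrow> 'v \<Rightarrow> (int \<Rightarrow> 'v) \<Rightarrow> real \<Rightarrow> (int \<Rightarrow> 'v) set" where
  "rho_ball par r0 \<omega> r = {\<eta> \<in> bdry par r0. gromov par r0 \<omega> \<eta> < r}"

definition rho_open :: "('v \<Rightarrow> 'v) \<Rightarrow> 'v \<Rightarrow> (int \<Rightarrow> 'v) set \<Rightarrow> bool" where
  "rho_open par r0 U \<longleftrightarrow> U \<subseteq> bdry par r0 \<and> (\<forall>\<omega>\<in>U. \<exists>r>0. rho_ball par r0 \<omega> r \<subseteq> U)"

definition borel_on_bdry :: "('v \<Rightarrow> 'v) \<Rightarrow> 'v \<Rightarrow> (int \<Rightarrow> 'v) measure \<Rightarrow> bool" where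
  "borel_on_bdry par r0 \<nu> \<longleftrightarrow> space \<nu> = bdry par r0 \<and>
     sets \<nu> = sigma_sets (bdry par r0) {U. rho_open par r0 U}"

definition cyl :: "('v \<Rightarrow> 'v) \<Rightarrow> 'v \<Rightarrow> 'v \<Rightarrow> (int \<Rightarrow> 'v) set" where
  "cyl par r0 x = {\<omega> \<in> bdry par r0. x \<in> range \<omega>}"

definition m_nu :: "('v \<Rightarrow> 'v) \<Rightarrow> 'v \<Rightarrow> (int \<Rightarrow> 'v) measure \<Rightarrow> 'v \<Rightarrow> real" where
  "m_nu par r0 \<nu> x = measure \<nu> (cyl par r0 x)"

definition doubling :: "('v \<Rightarrow> 'v) \<Rightarrow> 'v \<Rightarrow> (int \<Rightarrow> 'v) measure \<Rightarrow> bool" where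
  "doubling par r0 \<nu> \<longleftrightarrow> (\<exists>C::real. \<forall>\<omega>\<in>bdry par r0. \<forall>r. 
      emeasure \<nu> (rho_ball par r0 \<omega> (2 * r)) \<le> ennreal C * emeasure \<nu> (rho_ball par r0 \<omega> r))"

definition cond_A1 :: "('v \<Rightarrow> 'v) \<Rightarrow> 'v \<Rightarrow> (int \<Rightarrow> 'v) measure \<Rightarrow> ('v \<Rightarrow> (int \<Rightarrow> 'v) \<Rightarrow> complex) \<Rightarrow> bool" where
  "cond_A1 par r0 \<nu> K \<longleftrightarrow> (\<forall>x. integrable \<nu> (K x) \<and> (\<integral>\<omega>. K x \<omega> \<partial>\<nu>) = 0)"

definition cond_A2 :: "('v \<Rightarrow> 'v) \<Rightarrow> 'v \<Rightarrow> (int \<Rightarrow> 'v) measure \<Rightarrow> ('v \<Rightarrow> (int \<Rightarrow> 'v) \<Rightarrow> complex) \<Rightarrow> bool" where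
  "cond_A2 par r0 \<nu> K \<longleftrightarrow> (\<exists>C::real. AE \<omega> in \<nu>.
      (\<lambda>x. cmod (K x \<omega>) * m_nu par r0 \<nu> x) summable_on UNIV \<and>
      (\<Sum>\<^sub>\<infinity>x. cmod (K x \<omega>) * m_nu par r0 \<nu> x) \<le> C)"

definition cond_A3_with :: "('v \<Rightarrow> 'v) \<Rightarrow> 'v \<Rightarrow> (int \<Rightarrow> 'v) measure \<Rightarrow> real \<Rightarrow> ('v \<Rightarrow> (int \<Rightarrow> 'v) \<Rightarrow> complex) \<Rightarrow> bool" where
  "cond_A3_with par r0 \<nu> \<alpha> K \<longleftrightarrow> (\<forall>x. \<forall>\<omega>\<in>bdry par r0.
      cmod (K x \<omega>) \<le> m_nu par r0 \<nu> x powr \<alpha> / m_nu par r0 \<nu> (conf_vb par r0 x \<omega>) powr (\<alpha> + 1))"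

definition class_O :: "('v \<Rightarrow> 'v) \<Rightarrow> 'v \<Rightarrow> (int \<Rightarrow> 'v) measure \<Rightarrow> ('v \<Rightarrow> (int \<Rightarrow> 'v) \<Rightarrow> complex) \<Rightarrow> bool" where
  "class_O par r0 \<nu> K \<longleftrightarrow> cond_A1 par r0 \<nu> K \<and> cond_A2 par r0 \<nu> K \<and> (\<exists>\<alpha>>0. cond_A3_with par r0 \<nu> \<alpha> K)"

definition strong_bound :: "('v \<Rightarrow> 'v) \<Rightarrow> 'v \<Rightarrow> (int \<Rightarrow> 'v) measure \<Rightarrow> real \<Rightarrow> real \<Rightarrow> ('v \<Rightarrow> (int \<Rightarrow> 'v) \<Rightarrow> complex) \<Rightarrow> bool" where
  "strong_bound par r0 \<nu> \<alpha> \<delta> K \<longleftrightarrow> (\<forall>x. \<forall>\<omega>\<in>bdry par r0.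
      cmod (K x \<omega>) \<le> m_nu par r0 \<nu> x powr \<alpha> / m_nu par r0 \<nu> (conf_vb par r0 x \<omega>) powr (\<alpha> + 1)
        * (min (1 / m_nu par r0 \<nu> (conf_vb par r0 x \<omega>)) (m_nu par r0 \<nu> (conf_vb par r0 x \<omega>))) powr (1 + \<delta>))"

end

theory Submission
  imports Defs
begin

text \<open>Two successors per vertex and doubling together give a uniform ratio \<open>q < 1\<close> with
  \<open>m(x) \<le> q m(parent x)\<close>. Fix \<open>\<omega>\<close> and group the vertices \<open>x\<close> by their confluent \<open>y = x \<and> \<omega>\<close>, a vertex
  \<open>\<omega>(k)\<close> of the geodesic of \<open>\<omega>\<close>, and by the distance \<open>j\<close> from \<open>x\<close> up to \<open>y\<close>. The cylinders of such \<open>x\<close>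
  are disjoint subsets of \<open>\<partial>T\<^sub>y\<close>, and \<open>m(x)\<^sup>\<alpha> \<le> q\<^sup>\<alpha>\<^sup>j m(y)\<^sup>\<alpha>\<close>, so the group contributes at most
  \<open>q\<^sup>\<alpha>\<^sup>j min(1/m(y), m(y))\<close>. Summing the geometric series in \<open>j\<close>, and the series in \<open>k\<close> (geometric in
  both directions because \<open>m(\<omega>(k))\<close> grows at least geometrically with \<open>k\<close>), gives a bound independent
  of \<open>\<omega>\<close>.
  Integrability is the same estimate for a single \<open>x\<close>: \<open>|K(x,\<omega>)|\<close> is at most \<open>m(x)\<^sup>\<alpha>/m(y)\<^sup>\<alpha>\<^sup>+\<^sup>1\<close> on
  \<open>\<partial>T\<^sub>y\<close> for each ancestor \<open>y\<close> of \<open>x\<close>. A kernel with mean zero is supported at the base vertex,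
  with opposite constant values on the cylinders of two of its successors.\<close>

lemma ex_least_int:
  fixes P :: "int \<Rightarrow> bool"
  assumes "P k" and "\<And>k. P k \<Longrightarrow> b \<le> k"
  shows "\<exists>k0. P k0 \<and> (\<forall>k. P k \<longrightarrow> k0 \<le> k)"
proof -
  obtain k0 where k0: "P k0" "\<forall>k. P k \<longrightarrow> nat (k0 - b) \<le> nat (k - b)"
    using ex_has_least_nat[of P k "\<lambda>k. nat (k - b)"] assms(1) by blast
  have "k0 \<le> k" if "P k" for k
    using k0(2) that assms(2)[OF that] assms(2)[OF k0(1)] by fastforce
  then show ?thesis using k0(1) by blast
qed

lemma sum_le_geometric_series:
  fixes h :: "'a \<Rightarrow> real"
  assumes "finite S" "inj_on f S" "\<And>k. k \<in> S \<Longrightarrow> h k \<le> r ^ f k" "0 \<le> r" "r < 1"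
  shows "sum h S \<le> 1 / (1 - r)"
proof -
  have "sum h S \<le> (\<Sum>k\<in>S. r ^ f k)" using assms(3) by (rule sum_mono)
  also have "\<dots> = (\<Sum>i\<in>f ` S. r ^ i)" using sum.reindex[OF assms(2), of "\<lambda>i. r ^ i"] by simp
  also have "\<dots> \<le> (\<Sum>i. r ^ i)"
    by (rule sum_le_suminf) (use assms in \<open>auto intro: summable_geometric\<close>)
  also have "\<dots> = 1 / (1 - r)" by (rule suminf_geometric) (use assms in simp)
  finally show ?thesis .
qed

lemma ennreal_le_suminf: "(f i :: ennreal) \<le> suminf f"
  using sum_le_suminf[OF summableI, of "{i}" f] by simp

lemma exp_of_int_less_exp_iff:
  "exp (real_of_int k) < exp (real_of_int (L + 1)) \<longleftrightarrow> k \<le> L"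
  by (simp only: exp_less_cancel_iff of_int_less_iff) linarith

lemma exp_of_int_less_two_exp_iff:
  "exp (real_of_int k) < 2 * exp (real_of_int (L + 1)) \<longleftrightarrow> k \<le> L + 1"
proof
  assume "k \<le> L + 1"
  then have "exp (real_of_int k) \<le> exp (real_of_int (L + 1))" by simp
  then show "exp (real_of_int k) < 2 * exp (real_of_int (L + 1))"
    using exp_gt_zero[of "real_of_int (L + 1)"] by linarith
next
  assume less: "exp (real_of_int k) < 2 * exp (real_of_int (L + 1))"
  show "k \<le> L + 1"
  proof (rule ccontr)
    assume "\<not> k \<le> L + 1"
    then have "exp (real_of_int (L + 1) + 1) \<le> exp (real_of_int k)" by simp
    moreover have "2 * exp (real_of_int (L + 1)) \<le> exp (real_of_int (L + 1)) * exp 1"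
      using exp_ge_add_one_self[of 1] exp_gt_zero[of "real_of_int (L + 1)"] by simp
    ultimately have "exp (real_of_int (L + 1)) * exp 1 < 2 * exp (real_of_int (L + 1))"
      using less unfolding exp_add by linarith
    with \<open>2 * exp (real_of_int (L + 1)) \<le> exp (real_of_int (L + 1)) * exp 1\<close> show False by simp
  qed
qed

lemma min_inverse_self_le_one: "min (1 / t) (t :: real) \<le> 1"
proof (cases "t \<le> 1")
  case False
  then have "1 / t \<le> 1" by simp
  then show ?thesis by (simp add: min.coboundedI1)
qed (simp add: min.coboundedI2)

lemma min_inverse_self_powr_le:
  assumes "0 < t" "0 \<le> (\<delta> :: real)"
  shows "min (1 / t) t powr (1 + \<delta>) \<le> min (1 / t) t"
proof -
  have "min (1 / t) t powr (1 + \<delta>) \<le> min (1 / t) t powr 1"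
    by (rule powr_mono') (use assms min_inverse_self_le_one[of t] in auto)
  then show ?thesis using assms by simp
qed

locale rooted_tree =
  fixes par :: "'v \<Rightarrow> 'v" and r0 :: 'v
  assumes tree: "tree_with_end par"
begin

lemma rays_meet: "\<exists>m n. (par ^^ m) x = (par ^^ n) y"
  using tree unfolding tree_with_end_def by blast

lemma funpow_par_fixed_imp_zero: "(par ^^ n) x = x \<Longrightarrow> n = 0"
  using tree unfolding tree_with_end_def by blast

lemma funpow_par_eq_imp_eq:
  assumes "(par ^^ a) x = (par ^^ b) x"
  shows "a = b"
proof -
  have False if "a < b" "(par ^^ a) x = (par ^^ b) x" for a b
  proof -
    have "b - a + a = b" using that(1) by simp
    then have "(par ^^ (b - a)) ((par ^^ a) x) = (par ^^ a) x"
      using that(2) funpow_add[of "b - a" a par] by (metis comp_apply)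
    then show False using funpow_par_fixed_imp_zero that(1) by fastforce
  qed
  then show ?thesis using assms by (metis linorder_neqE_nat)
qed

lemma level_eqI:
  assumes "(par ^^ m) x = (par ^^ n) r0"
  shows "level par r0 x = int n - int m"
  unfolding level_def
proof (rule the_equality)
  show "\<exists>m' n'. (par ^^ m') x = (par ^^ n') r0 \<and> int n - int m = int n' - int m'"
    using assms by blast
next
  have same_level: "int n' - int m' = int n - int m"
    if "m \<le> m'" "(par ^^ m) x = (par ^^ n) r0" "(par ^^ m') x = (par ^^ n') r0" for m n m' n'
  proof -
    have "(par ^^ m') x = (par ^^ (m' - m + n)) r0"
      using that(1,2) funpow_add[of "m' - m" m par] funpow_add[of "m' - m" n par] by simp
    then have "m' - m + n = n'" using that(3) funpow_par_eq_imp_eq by metis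
    then show ?thesis using that(1) by linarith
  qed
  fix k
  assume "\<exists>m' n'. (par ^^ m') x = (par ^^ n') r0 \<and> k = int n' - int m'"
  then obtain m' n' where mn': "(par ^^ m') x = (par ^^ n') r0" and k: "k = int n' - int m'"
    by blast
  show "k = int n - int m"
  proof (cases "m \<le> m'")
    case True
    then show ?thesis using same_level[OF True assms mn'] k by simp
  next
    case False
    then show ?thesis using same_level[of m' m n' n] assms mn' k by simp
  qed
qed

lemma level_par [simp]: "level par r0 (par x) = level par r0 x + 1"
proof -
  obtain m n where mn: "(par ^^ m) x = (par ^^ n) r0" using rays_meet by blast
  show ?thesis
  proof (cases m)
    case 0
    then have "(par ^^ 0) (par x) = (par ^^ Suc n) r0" using mn by simp
    then have "level par r0 (par x) = int (Suc n) - int 0" by (rule level_eqI)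
    moreover have "level par r0 x = int n - int m" using mn by (rule level_eqI)
    ultimately show ?thesis using 0 by simp
  next
    case (Suc k)
    then have "(par ^^ k) (par x) = (par ^^ n) r0" using mn by (simp add: funpow_swap1)
    then have "level par r0 (par x) = int n - int k" by (rule level_eqI)
    moreover have "level par r0 x = int n - int m" using mn by (rule level_eqI)
    ultimately show ?thesis using Suc by simp
  qed
qed

lemma level_funpow [simp]: "level par r0 ((par ^^ n) x) = level par r0 x + int n"
  by (induction n) auto

lemma above_iff: "y \<in> above par x \<longleftrightarrow> (\<exists>n. y = (par ^^ n) x)"
  unfolding above_def by auto

lemma above_eq_funpow_level:
  assumes "y \<in> above par x"
  shows "level par r0 x \<le> level par r0 y"
    and "y = (par ^^ nat (level par r0 y - level par r0 x)) x"
  using assms unfolding above_iff by auto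

lemma bdry_level [simp]: "\<omega> \<in> bdry par r0 \<Longrightarrow> level par r0 (\<omega> k) = k"
  unfolding bdry_def by blast

lemma bdry_par: "\<omega> \<in> bdry par r0 \<Longrightarrow> par (\<omega> k) = \<omega> (k + 1)"
  unfolding bdry_def by blast

lemma bdry_add_funpow:
  assumes "\<omega> \<in> bdry par r0"
  shows "\<omega> (k + int n) = (par ^^ n) (\<omega> k)"
proof (induction n)
  case (Suc n)
  have "\<omega> (k + int (Suc n)) = par (\<omega> (k + int n))"
    using bdry_par[OF assms, of "k + int n"] by (simp add: ac_simps)
  then show ?case using Suc by simp
qed simp

lemma in_range_bdry_iff:
  assumes "\<omega> \<in> bdry par r0"
  shows "v \<in> range \<omega> \<longleftrightarrow> \<omega> (level par r0 v) = v"
proof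
  assume "\<omega> (level par r0 v) = v"
  then show "v \<in> range \<omega>" using range_eqI[of v \<omega> "level par r0 v"] by simp
qed (use assms in auto)

lemma bdry_agree_upwards:
  assumes "\<omega> \<in> bdry par r0" "\<eta> \<in> bdry par r0" "\<omega> k = \<eta> k" "k \<le> k'"
  shows "\<omega> k' = \<eta> k'"
proof -
  have "\<omega> (k + int (nat (k' - k))) = \<eta> (k + int (nat (k' - k)))"
    unfolding bdry_add_funpow[OF assms(1)] bdry_add_funpow[OF assms(2)] assms(3) ..
  then show ?thesis using assms(4) by simp
qed

lemma bdry_eventually_agree:
  assumes "\<omega> \<in> bdry par r0" "\<eta> \<in> bdry par r0"
  shows "\<exists>k. \<omega> k = \<eta> k"
proof -
  obtain m n where "(par ^^ m) (\<omega> 0) = (par ^^ n) (\<eta> 0)" using rays_meet by blast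
  then have eq: "\<omega> (int m) = \<eta> (int n)"
    using bdry_add_funpow[OF assms(1), of 0 m] bdry_add_funpow[OF assms(2), of 0 n] by simp
  then have "int m = int n"
    using bdry_level[OF assms(1), of "int m"] bdry_level[OF assms(2), of "int n"] by simp
  then show ?thesis using eq by auto
qed

lemma bdry_meets_above:
  assumes "\<omega> \<in> bdry par r0"
  shows "\<exists>k. \<omega> k \<in> above par x"
proof -
  obtain m n where "(par ^^ m) x = (par ^^ n) (\<omega> 0)" using rays_meet by blast
  then have "\<omega> (int n) = (par ^^ m) x" using bdry_add_funpow[OF assms, of 0 n] by simp
  then show ?thesis unfolding above_iff by blast
qed

lemma conf_eqI:
  assumes "y \<in> U \<inter> V" "\<forall>z\<in>U \<inter> V. level par r0 y \<le> level par r0 z"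
    and "\<forall>z1\<in>U \<inter> V. \<forall>z2\<in>U \<inter> V. level par r0 z1 = level par r0 z2 \<longrightarrow> z1 = z2"
  shows "conf par r0 U V = y"
  unfolding conf_def by (rule the_equality) (use assms in \<open>blast, meson antisym\<close>)

lemma conf_vb_on_bdry:
  assumes "\<omega> \<in> bdry par r0"
  shows "\<exists>k0. conf_vb par r0 x \<omega> = \<omega> k0 \<and> \<omega> k0 \<in> above par x \<and>
           (\<forall>k. \<omega> k \<in> above par x \<longrightarrow> k0 \<le> k)"
proof -
  obtain k where "\<omega> k \<in> above par x" using bdry_meets_above[OF assms] by blast
  moreover have "level par r0 x \<le> k" if "\<omega> k \<in> above par x" for k
    using above_eq_funpow_level(1)[OF that] assms by simp
  ultimately obtain k0 where k0: "\<omega> k0 \<in> above par x" "\<forall>k. \<omega> k \<in> above par x \<longrightarrow> k0 \<le> k"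
    using ex_least_int[of "\<lambda>k. \<omega> k \<in> above par x"] by blast
  have "conf par r0 (above par x) (range \<omega>) = \<omega> k0"
    by (rule conf_eqI) (use k0 assms in auto)
  then show ?thesis using k0 unfolding conf_vb_def by blast
qed

lemma conf_bb_on_bdry:
  assumes "\<omega> \<in> bdry par r0" "\<eta> \<in> bdry par r0" "\<omega> \<noteq> \<eta>"
  shows "\<exists>k0. conf_bb par r0 \<omega> \<eta> = \<omega> k0 \<and> (\<forall>k. \<omega> k = \<eta> k \<longleftrightarrow> k0 \<le> k)"
proof -
  obtain k where "\<omega> k = \<eta> k" using bdry_eventually_agree[OF assms(1,2)] by blast
  moreover obtain k1 where k1: "\<omega> k1 \<noteq> \<eta> k1" using assms(3) by blast
  moreover have "k1 \<le> k" if "\<omega> k = \<eta> k" for k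
    using bdry_agree_upwards[OF assms(1,2) that, of k1] k1 by force
  ultimately obtain k0 where k0: "\<omega> k0 = \<eta> k0" "\<forall>k. \<omega> k = \<eta> k \<longrightarrow> k0 \<le> k"
    using ex_least_int[of "\<lambda>k. \<omega> k = \<eta> k"] by blast
  have agree_iff: "\<forall>k. \<omega> k = \<eta> k \<longleftrightarrow> k0 \<le> k"
    using k0 bdry_agree_upwards[OF assms(1,2) k0(1)] by blast
  have "conf par r0 (range \<omega>) (range \<eta>) = \<omega> k0"
  proof (rule conf_eqI)
    show "\<omega> k0 \<in> range \<omega> \<inter> range \<eta>" using k0(1) by (metis IntI rangeI)
    show "\<forall>z\<in>range \<omega> \<inter> range \<eta>. level par r0 (\<omega> k0) \<le> level par r0 z"
    proof
      fix z
      assume "z \<in> range \<omega> \<inter> range \<eta>"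
      then have "\<omega> (level par r0 z) = \<eta> (level par r0 z)"
        using in_range_bdry_iff assms(1,2) by (metis IntD1 IntD2)
      then show "level par r0 (\<omega> k0) \<le> level par r0 z" using agree_iff assms(1) by simp
    qed
    show "\<forall>z1\<in>range \<omega> \<inter> range \<eta>. \<forall>z2\<in>range \<omega> \<inter> range \<eta>.
            level par r0 z1 = level par r0 z2 \<longrightarrow> z1 = z2"
      using in_range_bdry_iff[OF assms(1)] by (metis IntD1)
  qed
  then show ?thesis using agree_iff unfolding conf_bb_def by blast
qed

lemma mem_cyl_iff: "\<omega> \<in> cyl par r0 v \<longleftrightarrow> \<omega> \<in> bdry par r0 \<and> \<omega> (level par r0 v) = v"
  unfolding cyl_def using in_range_bdry_iff by blast

lemma cyl_subset_cyl_par: "cyl par r0 y \<subseteq> cyl par r0 (par y)"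
proof
  fix \<omega>
  assume "\<omega> \<in> cyl par r0 y"
  then have "\<omega> \<in> bdry par r0" "\<omega> (level par r0 y) = y" by (auto simp: mem_cyl_iff)
  then show "\<omega> \<in> cyl par r0 (par y)" using bdry_par[of \<omega> "level par r0 y"] by (simp add: mem_cyl_iff)
qed

lemma cyl_subset_cyl_funpow: "cyl par r0 y \<subseteq> cyl par r0 ((par ^^ n) y)"
  by (induction n) (use cyl_subset_cyl_par in auto)

lemma cyl_subset_cyl_above: "v \<in> above par x \<Longrightarrow> cyl par r0 x \<subseteq> cyl par r0 v"
  unfolding above_iff using cyl_subset_cyl_funpow by blast

lemma cyl_disjoint:
  "level par r0 a = level par r0 b \<Longrightarrow> a \<noteq> b \<Longrightarrow> cyl par r0 a \<inter> cyl par r0 b = {}"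
  by (auto simp: mem_cyl_iff)

lemma conf_vb_props:
  fixes x
  assumes "\<omega> \<in> bdry par r0"
  defines "k \<equiv> level par r0 (conf_vb par r0 x \<omega>)"
  shows "conf_vb par r0 x \<omega> = \<omega> k" and "level par r0 x \<le> k"
    and "conf_vb par r0 x \<omega> = (par ^^ nat (k - level par r0 x)) x"
    and "cyl par r0 x \<subseteq> cyl par r0 (\<omega> k)"
    and "\<omega> \<in> cyl par r0 (conf_vb par r0 x \<omega>)"
proof -
  obtain k0 where k0: "conf_vb par r0 x \<omega> = \<omega> k0" "\<omega> k0 \<in> above par x"
    using conf_vb_on_bdry[OF assms(1)] by blast
  have k: "k = k0" unfolding k_def k0(1) using assms(1) by simp
  show conf: "conf_vb par r0 x \<omega> = \<omega> k" using k0(1) k by simp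
  show "level par r0 x \<le> k" "conf_vb par r0 x \<omega> = (par ^^ nat (k - level par r0 x)) x"
    using above_eq_funpow_level[OF k0(2)] assms(1) k0(1) k by auto
  show "cyl par r0 x \<subseteq> cyl par r0 (\<omega> k)" using cyl_subset_cyl_above[OF k0(2)] k by simp
  show "\<omega> \<in> cyl par r0 (conf_vb par r0 x \<omega>)" using conf assms(1) by (simp add: mem_cyl_iff)
qed

lemma conf_vb_par_of_child:
  assumes "\<omega> \<in> cyl par r0 a"
  shows "conf_vb par r0 (par a) \<omega> = par a"
proof -
  have a: "\<omega> \<in> bdry par r0" "\<omega> (level par r0 a) = a" using assms by (auto simp: mem_cyl_iff)
  then have \<omega>: "\<omega> \<in> bdry par r0" "\<omega> (level par r0 (par a)) = par a"
    using bdry_par[OF a(1), of "level par r0 a"] by simp_all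
  obtain k0 where k0: "conf_vb par r0 (par a) \<omega> = \<omega> k0" "\<omega> k0 \<in> above par (par a)"
    "\<forall>k. \<omega> k \<in> above par (par a) \<longrightarrow> k0 \<le> k"
    using conf_vb_on_bdry[OF \<omega>(1)] by blast
  have "par a \<in> above par (par a)" unfolding above_iff by (rule exI[of _ 0]) simp
  then have "k0 \<le> level par r0 (par a)" using k0(3) \<omega>(2) by metis
  moreover have "level par r0 (par a) \<le> k0"
    using above_eq_funpow_level(1)[OF k0(2)] \<omega>(1) by simp
  ultimately show ?thesis using k0(1) \<omega>(2) by simp
qed

end

locale tree_boundary_measure = rooted_tree par r0 for par :: "'v \<Rightarrow> 'v" and r0 :: 'v +
  fixes \<nu> :: "(int \<Rightarrow> 'v) measure"
  assumes borel: "borel_on_bdry par r0 \<nu>"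
    and cyl_pos: "\<forall>x. 0 < emeasure \<nu> (cyl par r0 x) \<and> emeasure \<nu> (cyl par r0 x) < \<infinity>"
begin

abbreviation "m \<equiv> m_nu par r0 \<nu>"

lemma space_eq_bdry: "space \<nu> = bdry par r0"
  using borel unfolding borel_on_bdry_def by blast

lemma sets_cyl: "cyl par r0 x \<in> sets \<nu>"
  using cyl_pos emeasure_notin_sets by (metis less_irrefl)

lemma emeasure_cyl: "emeasure \<nu> (cyl par r0 x) = ennreal (m x)"
  unfolding m_nu_def using cyl_pos by (simp add: emeasure_eq_ennreal_measure less_top)

lemma m_pos: "0 < m x"
  using cyl_pos[rule_format, of x] emeasure_cyl[of x] by (simp add: ennreal_less_zero_iff)

lemma fmeasurable_cyl: "cyl par r0 x \<in> fmeasurable \<nu>"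
  using sets_cyl cyl_pos by (simp add: fmeasurable_def)

lemma cyl_nonempty: "\<exists>\<omega>. \<omega> \<in> cyl par r0 x"
proof (rule ccontr)
  assume "\<nexists>\<omega>. \<omega> \<in> cyl par r0 x"
  then have "cyl par r0 x = {}" by blast
  then show False using cyl_pos[rule_format, of x] by simp
qed

lemma sum_m_level_le:
  assumes "finite F" "\<forall>x\<in>F. level par r0 x = L \<and> cyl par r0 x \<subseteq> cyl par r0 y"
  shows "(\<Sum>x\<in>F. m x) \<le> m y"
proof -
  have disj: "disjoint_family_on (cyl par r0) F"
    unfolding disjoint_family_on_def using assms(2) cyl_disjoint by metis
  have "(\<Sum>x\<in>F. m x) = measure \<nu> (\<Union>x\<in>F. cyl par r0 x)"
    unfolding m_nu_def
    using measure_finite_Union[of F "cyl par r0" \<nu>, OF assms(1) _ disj] sets_cyl cyl_pos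
    by (metis image_subsetI less_irrefl top.not_eq_extremum)
  also have "\<dots> \<le> measure \<nu> (cyl par r0 y)"
    by (rule measure_mono_fmeasurable, use assms(2) in blast, use assms(1) sets_cyl in blast,
        rule fmeasurable_cyl)
  finally show ?thesis unfolding m_nu_def .
qed

lemma gromov_less_iff:
  assumes "\<omega> \<in> bdry par r0" "\<eta> \<in> bdry par r0"
  shows "gromov par r0 \<omega> \<eta> < exp (real_of_int (L + 1)) \<longleftrightarrow> \<omega> L = \<eta> L"
    and "gromov par r0 \<omega> \<eta> < 2 * exp (real_of_int (L + 1)) \<longleftrightarrow> \<omega> (L + 1) = \<eta> (L + 1)"
proof -
  have "(gromov par r0 \<omega> \<eta> < exp (real_of_int (L + 1)) \<longleftrightarrow> \<omega> L = \<eta> L) \<and>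
    (gromov par r0 \<omega> \<eta> < 2 * exp (real_of_int (L + 1)) \<longleftrightarrow> \<omega> (L + 1) = \<eta> (L + 1))"
  proof (cases "\<omega> = \<eta>")
    case False
    obtain k0 where k0: "conf_bb par r0 \<omega> \<eta> = \<omega> k0" "\<forall>k. \<omega> k = \<eta> k \<longleftrightarrow> k0 \<le> k"
      using conf_bb_on_bdry[OF assms False] by blast
    have "gromov par r0 \<omega> \<eta> = exp (real_of_int k0)"
      unfolding gromov_def using False k0(1) assms(1) by simp
    then show ?thesis
      using k0(2) exp_of_int_less_exp_iff exp_of_int_less_two_exp_iff by simp
  qed (simp add: gromov_def)
  then show "gromov par r0 \<omega> \<eta> < exp (real_of_int (L + 1)) \<longleftrightarrow> \<omega> L = \<eta> L"
    and "gromov par r0 \<omega> \<eta> < 2 * exp (real_of_int (L + 1)) \<longleftrightarrow> \<omega> (L + 1) = \<eta> (L + 1)"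
    by auto
qed

lemma rho_ball_eq_cyl:
  assumes "\<omega> \<in> bdry par r0"
  shows "rho_ball par r0 \<omega> (exp (real_of_int (L + 1))) = cyl par r0 (\<omega> L)"
    and "rho_ball par r0 \<omega> (2 * exp (real_of_int (L + 1))) = cyl par r0 (\<omega> (L + 1))"
  unfolding rho_ball_def using gromov_less_iff[OF assms] assms by (auto simp: mem_cyl_iff)

lemma doubling_imp_m_par_le:
  assumes "doubling par r0 \<nu>"
  shows "\<exists>C>0. \<forall>z. m (par z) \<le> C * m z"
proof -
  obtain C where C: "\<forall>\<omega>\<in>bdry par r0. \<forall>r.
      emeasure \<nu> (rho_ball par r0 \<omega> (2 * r)) \<le> ennreal C * emeasure \<nu> (rho_ball par r0 \<omega> r)"
    using assms unfolding doubling_def by blast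
  have ennreal_le: "ennreal (m (par z)) \<le> ennreal C * ennreal (m z)" for z
  proof -
    obtain \<omega> where "\<omega> \<in> cyl par r0 z" using cyl_nonempty by blast
    then have \<omega>: "\<omega> \<in> bdry par r0" "\<omega> (level par r0 z) = z" by (auto simp: mem_cyl_iff)
    then have "\<omega> (level par r0 z + 1) = par z" using bdry_par by metis
    then show ?thesis
      using C[rule_format, OF \<omega>(1), of "exp (real_of_int (level par r0 z + 1))"]
      unfolding rho_ball_eq_cyl[OF \<omega>(1)] \<omega>(2) emeasure_cyl by simp
  qed
  have "C > 0"
  proof (rule ccontr)
    assume "\<not> C > 0"
    then have "ennreal C = 0" by (simp add: ennreal_eq_0_iff)
    then show False using ennreal_le[of r0] m_pos[of "par r0"] by simp
  qed
  moreover have "m (par z) \<le> C * m z" for z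
    using ennreal_le[of z] \<open>C > 0\<close> m_pos[of z] by (simp add: ennreal_mult[symmetric])
  ultimately show ?thesis by blast
qed

text \<open>The sibling \<open>s\<close> of \<open>z\<close> has mass at least \<open>m(par z)/C\<close> by doubling, and
  \<open>m z + m s \<le> m(par z)\<close>; this is where two successors per vertex are needed.\<close>

lemma doubling_imp_m_decay:
  assumes "doubling par r0 \<nu>"
    and two_succ: "\<forall>x. \<exists>y z. y \<in> successors par x \<and> z \<in> successors par x \<and> y \<noteq> z"
  shows "\<exists>q. 0 < q \<and> q < 1 \<and> (\<forall>z. m z \<le> q * m (par z))"
proof -
  obtain C where C: "C > 0" "\<forall>z. m (par z) \<le> C * m z"
    using doubling_imp_m_par_le[OF assms(1)] by blast
  define q where "q = 1 - 1 / C"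
  have decay: "m z \<le> q * m (par z)" for z
  proof -
    obtain y1 y2 where "par y1 = par z" "par y2 = par z" "y1 \<noteq> y2"
      using two_succ[rule_format, of "par z"] unfolding successors_def by blast
    then obtain s where s: "par s = par z" "s \<noteq> z" by metis
    have "level par r0 s = level par r0 z" using level_par[of s] level_par[of z] s(1) by simp
    then have "(\<Sum>x\<in>{z, s}. m x) \<le> m (par z)"
      using s cyl_subset_cyl_par[of s] cyl_subset_cyl_par[of z]
      by (intro sum_m_level_le[of _ "level par r0 z"]) auto
    then have "m z + m s \<le> m (par z)" using s(2) by simp
    moreover have "m (par z) / C \<le> m s" using C s(1) by (metis pos_divide_le_eq mult.commute)
    ultimately show ?thesis unfolding q_def using C(1) by (simp add: algebra_simps)
  qed
  have "0 < q * m (par r0)" using decay[of r0] m_pos[of r0] by linarith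
  then have "0 < q" using m_pos[of "par r0"] by (simp add: zero_less_mult_iff)
  moreover have "q < 1" unfolding q_def using C(1) by simp
  ultimately show ?thesis using decay by blast
qed

lemma strong_bound_le_min:
  assumes "0 \<le> \<delta>" "strong_bound par r0 \<nu> \<alpha> \<delta> K" "\<omega> \<in> bdry par r0"
  shows "cmod (K x \<omega>) \<le> m x powr \<alpha> / m (conf_vb par r0 x \<omega>) powr (\<alpha> + 1)
           * min (1 / m (conf_vb par r0 x \<omega>)) (m (conf_vb par r0 x \<omega>))"
proof -
  let ?y = "conf_vb par r0 x \<omega>"
  have "m x powr \<alpha> / m ?y powr (\<alpha> + 1) * min (1 / m ?y) (m ?y) powr (1 + \<delta>)
      \<le> m x powr \<alpha> / m ?y powr (\<alpha> + 1) * min (1 / m ?y) (m ?y)"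
    by (rule mult_left_mono) (use min_inverse_self_powr_le[OF m_pos assms(1)] in auto)
  then show ?thesis using assms(2,3) unfolding strong_bound_def by (meson order_trans)
qed

lemma strong_bound_imp_A3:
  assumes "0 \<le> \<delta>" "strong_bound par r0 \<nu> \<alpha> \<delta> K"
  shows "cond_A3_with par r0 \<nu> \<alpha> K"
  unfolding cond_A3_with_def
proof (intro allI ballI)
  fix x \<omega>
  assume \<omega>: "\<omega> \<in> bdry par r0"
  let ?y = "conf_vb par r0 x \<omega>"
  have "m x powr \<alpha> / m ?y powr (\<alpha> + 1) * min (1 / m ?y) (m ?y) \<le> m x powr \<alpha> / m ?y powr (\<alpha> + 1)"
    using mult_left_mono[OF min_inverse_self_le_one[of "m ?y"], of "m x powr \<alpha> / m ?y powr (\<alpha> + 1)"]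
    by simp
  then show "cmod (K x \<omega>) \<le> m x powr \<alpha> / m ?y powr (\<alpha> + 1)"
    using strong_bound_le_min[OF assms \<omega>, of x] by linarith
qed

lemma has_bochner_integral_cyl_difference:
  "has_bochner_integral \<nu>
     (\<lambda>\<omega>. c / m a * indicator (cyl par r0 a) \<omega> - c / m b * indicator (cyl par r0 b) \<omega>) 0"
proof -
  have "has_bochner_integral \<nu>
     (\<lambda>\<omega>. c / m a * indicator (cyl par r0 a) \<omega> - c / m b * indicator (cyl par r0 b) \<omega>)
     (c / m a * m a - c / m b * m b)"
    unfolding m_nu_def
    by (intro has_bochner_integral_diff has_bochner_integral_mult_right
        has_bochner_integral_real_indicator sets_cyl) (use cyl_pos in auto)
  then show ?thesis using m_pos[of a] m_pos[of b] by simp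
qed

lemma not_AE_zero_if_nonzero_on_cyl:
  assumes "\<forall>\<omega>\<in>cyl par r0 a. f \<omega> \<noteq> 0"
  shows "\<not> (AE \<omega> in \<nu>. f \<omega> = 0)"
proof
  assume "AE \<omega> in \<nu>. f \<omega> = 0"
  then obtain N where N: "{\<omega> \<in> space \<nu>. f \<omega> \<noteq> 0} \<subseteq> N" "emeasure \<nu> N = 0" "N \<in> sets \<nu>"
    by (rule AE_E)
  have "cyl par r0 a \<subseteq> N" using assms N(1) space_eq_bdry by (auto simp: mem_cyl_iff)
  then have "emeasure \<nu> (cyl par r0 a) \<le> emeasure \<nu> N" using N(3) by (rule emeasure_mono)
  then show False using N(2) cyl_pos[rule_format, of a] by simp
qed

text \<open>The kernel lives at \<open>r0\<close> only, with values \<open>\<plusminus>c/m\<close> on the cylinders of two children \<open>a, b\<close>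
  of \<open>r0\<close>; for \<open>\<omega>\<close> there the confluent with \<open>r0\<close> is \<open>r0\<close> itself, so the bound of the kernel is
  the positive constant \<open>B\<close>, and \<open>c\<close> is chosen so that \<open>c/m \<le> B\<close>.\<close>

lemma mean_zero_kernel_exists:
  assumes children: "par a = r0" "par b = r0" "a \<noteq> b"
  shows "\<exists>K. (\<forall>x. K x \<in> borel_measurable \<nu>) \<and> strong_bound par r0 \<nu> \<alpha> \<delta> K \<and>
           \<not> (AE \<omega> in \<nu>. K r0 \<omega> = 0) \<and> (\<forall>x. (\<integral>\<omega>. K x \<omega> \<partial>\<nu>) = 0)"
proof -
  have disj: "cyl par r0 a \<inter> cyl par r0 b = {}"
    using children level_par[of a] level_par[of b] by (intro cyl_disjoint) auto
  define B where "B = m r0 powr \<alpha> / m r0 powr (\<alpha> + 1) * min (1 / m r0) (m r0) powr (1 + \<delta>)"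
  have "0 < min (1 / m r0) (m r0)" using m_pos[of r0] by simp
  then have "0 < min (1 / m r0) (m r0) powr (1 + \<delta>)" unfolding powr_gt_zero by linarith
  then have "0 < B" unfolding B_def using m_pos[of r0] by (intro mult_pos_pos divide_pos_pos) auto
  define c where "c = B * min (m a) (m b)"
  have c: "0 < c" "c / m a \<le> B" "c / m b \<le> B"
    unfolding c_def using \<open>0 < B\<close> m_pos[of a] m_pos[of b] by (auto simp: divide_le_eq mult_left_mono)
  define g where
    "g \<omega> = c / m a * indicator (cyl par r0 a) \<omega> - c / m b * indicator (cyl par r0 b) \<omega>" for \<omega>
  define K where "K x \<omega> = (if x = r0 then complex_of_real (g \<omega>) else 0)" for x \<omega>
  have "g \<in> borel_measurable \<nu>" unfolding g_def using sets_cyl[of a] sets_cyl[of b] by measurable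
  then have measurable: "\<forall>x. K x \<in> borel_measurable \<nu>" unfolding K_def by simp
  have "strong_bound par r0 \<nu> \<alpha> \<delta> K" unfolding strong_bound_def
  proof (intro allI ballI)
    fix x \<omega>
    let ?y = "conf_vb par r0 x \<omega>"
    show "cmod (K x \<omega>) \<le> m x powr \<alpha> / m ?y powr (\<alpha> + 1) * min (1 / m ?y) (m ?y) powr (1 + \<delta>)"
    proof (cases "x = r0 \<and> (\<omega> \<in> cyl par r0 a \<or> \<omega> \<in> cyl par r0 b)")
      case True
      then have "?y = r0" using conf_vb_par_of_child children by metis
      moreover have "\<bar>g \<omega>\<bar> \<le> B"
        using disj c \<open>0 < B\<close> m_pos[of a] m_pos[of b] unfolding g_def indicator_def by auto
      ultimately show ?thesis using True unfolding K_def B_def by simp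
    qed (auto simp: K_def g_def)
  qed
  moreover have "\<not> (AE \<omega> in \<nu>. K r0 \<omega> = 0)"
  proof (rule not_AE_zero_if_nonzero_on_cyl[of a])
    show "\<forall>\<omega>\<in>cyl par r0 a. K r0 \<omega> \<noteq> 0"
    proof
      fix \<omega>
      assume \<omega>: "\<omega> \<in> cyl par r0 a"
      then have "\<omega> \<notin> cyl par r0 b" using disj by blast
      then have "K r0 \<omega> = complex_of_real (c / m a)" using \<omega> unfolding K_def g_def by simp
      then show "K r0 \<omega> \<noteq> 0" using c(1) m_pos[of a] by simp
    qed
  qed
  moreover have "(\<integral>\<omega>. K x \<omega> \<partial>\<nu>) = 0" for x
  proof (cases "x = r0")
    case True
    have "integral\<^sup>L \<nu> g = 0"
      unfolding g_def by (rule has_bochner_integral_integral_eq[OF has_bochner_integral_cyl_difference])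
    then show ?thesis using True unfolding K_def by (simp add: integral_complex_of_real)
  qed (simp add: K_def)
  ultimately show ?thesis using measurable by blast
qed

end

locale decaying_tree_measure = tree_boundary_measure par r0 \<nu>
  for par :: "'v \<Rightarrow> 'v" and r0 :: 'v and \<nu> :: "(int \<Rightarrow> 'v) measure" +
  fixes q \<alpha> :: real
  assumes q_pos: "0 < q" and q_less_1: "q < 1" and m_decay: "\<forall>z. m z \<le> q * m (par z)"
    and \<alpha>_pos: "0 < \<alpha>"
begin

definition Q :: real where "Q = q powr \<alpha>"

lemma Q_pos: "0 < Q" and Q_less_1: "Q < 1"
  unfolding Q_def using q_pos powr_less_mono2[OF \<alpha>_pos _ q_less_1] by auto

lemma m_le_funpow: "m x \<le> q ^ n * m ((par ^^ n) x)"
proof (induction n)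
  case (Suc n)
  have "q ^ n * m ((par ^^ n) x) \<le> q ^ n * (q * m ((par ^^ Suc n) x))"
    using m_decay q_pos by (simp add: mult_left_mono)
  then show ?case using Suc by (simp add: algebra_simps)
qed simp

lemma m_powr_le_par: "m x powr \<alpha> \<le> Q * m (par x) powr \<alpha>"
proof -
  have "m x powr \<alpha> \<le> (q * m (par x)) powr \<alpha>"
    by (rule powr_mono2) (use \<alpha>_pos m_pos[of x] m_decay in auto)
  also have "\<dots> = Q * m (par x) powr \<alpha>" unfolding Q_def by (rule powr_mult)
  finally show ?thesis .
qed

lemma m_powr_le_funpow: "m x powr \<alpha> \<le> Q ^ n * m ((par ^^ n) x) powr \<alpha>"
proof (induction n)
  case (Suc n)
  have "Q ^ n * m ((par ^^ n) x) powr \<alpha> \<le> Q ^ n * (Q * m ((par ^^ Suc n) x) powr \<alpha>)"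
    using m_powr_le_par Q_pos by (simp add: mult_left_mono)
  then show ?case using Suc by (simp add: algebra_simps)
qed simp

lemma m_powr_div_ancestor_le:
  "m x powr \<alpha> / m ((par ^^ n) x) powr (\<alpha> + 1) \<le> Q ^ n / m ((par ^^ n) x)"
proof -
  let ?M = "m ((par ^^ n) x)"
  have M: "0 < ?M" "0 < ?M powr \<alpha>" using m_pos[of "(par ^^ n) x"] by auto
  have "m x powr \<alpha> / ?M powr (\<alpha> + 1) = (m x powr \<alpha> / ?M powr \<alpha>) / ?M"
    using M by (simp add: powr_add)
  also have "\<dots> \<le> Q ^ n / ?M"
    using m_powr_le_funpow[of x n] M by (simp add: divide_right_mono divide_le_eq)
  finally show ?thesis .
qed

lemma m_bdry_le_shift: "\<omega> \<in> bdry par r0 \<Longrightarrow> m (\<omega> k) \<le> q ^ n * m (\<omega> (k + int n))"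
  using m_le_funpow[of "\<omega> k" n] bdry_add_funpow by simp

lemma sum_m_bdry_small_le:
  assumes "\<omega> \<in> bdry par r0" "finite S" "\<forall>k\<in>S. m (\<omega> k) \<le> 1"
  shows "(\<Sum>k\<in>S. m (\<omega> k)) \<le> 1 / (1 - q)"
proof (cases "S = {}")
  case False
  define k1 where "k1 = Max S"
  have k1: "k1 \<in> S" "\<forall>k\<in>S. k \<le> k1" unfolding k1_def using assms(2) False by auto
  show ?thesis
  proof (rule sum_le_geometric_series[OF assms(2), of "\<lambda>k. nat (k1 - k)"])
    show "inj_on (\<lambda>k. nat (k1 - k)) S"
    proof (rule inj_onI)
      fix x y
      assume "x \<in> S" "y \<in> S" "nat (k1 - x) = nat (k1 - y)"
      then show "x = y" using k1(2) eq_nat_nat_iff[of "k1 - x" "k1 - y"] by auto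
    qed
    fix k
    assume k: "k \<in> S"
    have "m (\<omega> k) \<le> q ^ nat (k1 - k) * m (\<omega> (k + int (nat (k1 - k))))"
      by (rule m_bdry_le_shift[OF assms(1)])
    also have "k + int (nat (k1 - k)) = k1" using k k1 by simp
    also have "q ^ nat (k1 - k) * m (\<omega> k1) \<le> q ^ nat (k1 - k)"
      using assms(3) k1(1) q_pos by (simp add: mult_left_le)
    finally show "m (\<omega> k) \<le> q ^ nat (k1 - k)" .
  qed (use q_pos q_less_1 in auto)
qed (use q_less_1 in simp)

lemma sum_inverse_m_bdry_large_le:
  assumes "\<omega> \<in> bdry par r0" "finite S" "\<forall>k\<in>S. 1 < m (\<omega> k)"
  shows "(\<Sum>k\<in>S. 1 / m (\<omega> k)) \<le> 1 / (1 - q)"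
proof (cases "S = {}")
  case False
  define k2 where "k2 = Min S"
  have k2: "k2 \<in> S" "\<forall>k\<in>S. k2 \<le> k" unfolding k2_def using assms(2) False by auto
  show ?thesis
  proof (rule sum_le_geometric_series[OF assms(2), of "\<lambda>k. nat (k - k2)"])
    show "inj_on (\<lambda>k. nat (k - k2)) S"
    proof (rule inj_onI)
      fix x y
      assume "x \<in> S" "y \<in> S" "nat (x - k2) = nat (y - k2)"
      then show "x = y" using k2(2) eq_nat_nat_iff[of "x - k2" "y - k2"] by auto
    qed
    fix k
    assume k: "k \<in> S"
    have "m (\<omega> k2) \<le> q ^ nat (k - k2) * m (\<omega> (k2 + int (nat (k - k2))))"
      by (rule m_bdry_le_shift[OF assms(1)])
    also have "k2 + int (nat (k - k2)) = k" using k k2 by simp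
    finally have "1 \<le> q ^ nat (k - k2) * m (\<omega> k)" using assms(3) k2(1) by fastforce
    then show "1 / m (\<omega> k) \<le> q ^ nat (k - k2)"
      using m_pos[of "\<omega> k"] by (simp add: divide_le_eq mult.commute)
  qed (use q_pos q_less_1 in auto)
qed (use q_less_1 in simp)

text \<open>Along a geodesic, \<open>m(\<omega>(k))\<close> grows geometrically in \<open>k\<close>, so both the levels where
  \<open>m \<le> 1\<close> and those where \<open>m > 1\<close> contribute a geometric series.\<close>

lemma sum_min_inverse_m_bdry_le:
  assumes "\<omega> \<in> bdry par r0" "finite S"
  shows "(\<Sum>k\<in>S. min (1 / m (\<omega> k)) (m (\<omega> k))) \<le> 2 / (1 - q)"
proof -
  define S1 where "S1 = {k\<in>S. m (\<omega> k) \<le> 1}"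
  define S2 where "S2 = {k\<in>S. \<not> m (\<omega> k) \<le> 1}"
  have fin: "finite S1" "finite S2" unfolding S1_def S2_def using assms(2) by auto
  have "(\<Sum>k\<in>S. min (1 / m (\<omega> k)) (m (\<omega> k)))
      = (\<Sum>k\<in>S1. min (1 / m (\<omega> k)) (m (\<omega> k))) + (\<Sum>k\<in>S2. min (1 / m (\<omega> k)) (m (\<omega> k)))"
  proof -
    have "S = S1 \<union> S2" "S1 \<inter> S2 = {}" unfolding S1_def S2_def by auto
    then show ?thesis using sum.union_disjoint[OF fin] by simp
  qed
  also have "\<dots> \<le> (\<Sum>k\<in>S1. m (\<omega> k)) + (\<Sum>k\<in>S2. 1 / m (\<omega> k))"
    by (intro add_mono sum_mono) auto
  also have "\<dots> \<le> 1 / (1 - q) + 1 / (1 - q)"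
    using sum_m_bdry_small_le[OF assms(1) fin(1)] sum_inverse_m_bdry_large_le[OF assms(1) fin(2)]
    unfolding S1_def S2_def by (intro add_mono) auto
  finally show ?thesis by simp
qed

lemma sum_conf_weighted_le:
  assumes \<omega>: "\<omega> \<in> bdry par r0" and F: "finite F"
  shows "(\<Sum>x\<in>F. m x powr \<alpha> / m (conf_vb par r0 x \<omega>) powr (\<alpha> + 1)
            * min (1 / m (conf_vb par r0 x \<omega>)) (m (conf_vb par r0 x \<omega>)) * m x)
         \<le> 1 / (1 - Q) * (2 / (1 - q))"
proof -
  define kk where "kk x = level par r0 (conf_vb par r0 x \<omega>)" for x
  define jj where "jj x = nat (kk x - level par r0 x)" for x
  define G where "G k = min (1 / m (\<omega> k)) (m (\<omega> k))" for k
  define p where "p x = (kk x, jj x)" for x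
  have G_nonneg: "0 \<le> G k" for k unfolding G_def using m_pos[of "\<omega> k"] by simp
  have term_le: "m x powr \<alpha> / m (conf_vb par r0 x \<omega>) powr (\<alpha> + 1)
        * min (1 / m (conf_vb par r0 x \<omega>)) (m (conf_vb par r0 x \<omega>)) * m x
      \<le> Q ^ jj x * G (kk x) / m (\<omega> (kk x)) * m x" for x
  proof -
    note conf = conf_vb_props[OF \<omega>, of x, folded kk_def jj_def]
    have "m x powr \<alpha> / m (\<omega> (kk x)) powr (\<alpha> + 1) \<le> Q ^ jj x / m (\<omega> (kk x))"
      using m_powr_div_ancestor_le[of x "jj x"] conf(1,3) by simp
    then have "m x powr \<alpha> / m (\<omega> (kk x)) powr (\<alpha> + 1) * (G (kk x) * m x)
        \<le> Q ^ jj x / m (\<omega> (kk x)) * (G (kk x) * m x)"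
      by (rule mult_right_mono) (use G_nonneg m_pos[of x] in simp)
    then show ?thesis unfolding G_def conf(1) by (simp add: mult.assoc)
  qed
  have fiber_le: "(\<Sum>x\<in>{x\<in>F. p x = (k, j)}. Q ^ jj x * G (kk x) / m (\<omega> (kk x)) * m x)
      \<le> Q ^ j * G k" for k j
  proof -
    have "(\<Sum>x\<in>{x\<in>F. p x = (k, j)}. m x) \<le> m (\<omega> k)"
    proof (rule sum_m_level_le[of _ "k - int j"])
      show "\<forall>x\<in>{x\<in>F. p x = (k, j)}. level par r0 x = k - int j \<and> cyl par r0 x \<subseteq> cyl par r0 (\<omega> k)"
        using conf_vb_props(2,4)[OF \<omega>] unfolding p_def jj_def kk_def by auto
    qed (use F in simp)
    then have "Q ^ j * G k / m (\<omega> k) * (\<Sum>x\<in>{x\<in>F. p x = (k, j)}. m x)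
        \<le> Q ^ j * G k / m (\<omega> k) * m (\<omega> k)"
      by (rule mult_left_mono) (use Q_pos G_nonneg m_pos[of "\<omega> k"] in simp)
    moreover have "(\<Sum>x\<in>{x\<in>F. p x = (k, j)}. Q ^ jj x * G (kk x) / m (\<omega> (kk x)) * m x)
        = Q ^ j * G k / m (\<omega> k) * (\<Sum>x\<in>{x\<in>F. p x = (k, j)}. m x)"
      unfolding sum_distrib_left by (rule sum.cong) (auto simp: p_def)
    ultimately show ?thesis using m_pos[of "\<omega> k"] by simp
  qed
  have "(\<Sum>x\<in>F. m x powr \<alpha> / m (conf_vb par r0 x \<omega>) powr (\<alpha> + 1)
            * min (1 / m (conf_vb par r0 x \<omega>)) (m (conf_vb par r0 x \<omega>)) * m x)
      \<le> (\<Sum>x\<in>F. Q ^ jj x * G (kk x) / m (\<omega> (kk x)) * m x)"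
    by (rule sum_mono) (rule term_le)
  also have "\<dots> = (\<Sum>(k, j)\<in>p ` F. \<Sum>x\<in>{x\<in>F. p x = (k, j)}. Q ^ jj x * G (kk x) / m (\<omega> (kk x)) * m x)"
    by (subst sum.image_gen[OF F, of _ p]) (simp add: case_prod_beta)
  also have "\<dots> \<le> (\<Sum>(k, j)\<in>p ` F. Q ^ j * G k)"
    by (rule sum_mono) (use fiber_le in auto)
  also have "\<dots> \<le> (\<Sum>(k, j)\<in>kk ` F \<times> jj ` F. Q ^ j * G k)"
    by (rule sum_mono2) (use F Q_pos G_nonneg in \<open>auto simp: p_def\<close>)
  also have "\<dots> = (\<Sum>k\<in>kk ` F. G k) * (\<Sum>j\<in>jj ` F. Q ^ j)"
    by (simp add: sum.cartesian_product[symmetric] sum_product mult.commute)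
  also have "\<dots> \<le> (2 / (1 - q)) * (1 / (1 - Q))"
  proof (rule mult_mono)
    show "(\<Sum>k\<in>kk ` F. G k) \<le> 2 / (1 - q)"
      unfolding G_def by (rule sum_min_inverse_m_bdry_le[OF \<omega>]) (use F in simp)
    show "(\<Sum>j\<in>jj ` F. Q ^ j) \<le> 1 / (1 - Q)"
      by (rule sum_le_geometric_series[of _ id]) (use F Q_pos Q_less_1 in auto)
  qed (use q_less_1 Q_pos in \<open>auto intro: sum_nonneg\<close>)
  finally show ?thesis by (simp add: mult.commute)
qed

lemma summable_on_weighted_kernel:
  assumes \<delta>: "0 \<le> \<delta>" and K: "strong_bound par r0 \<nu> \<alpha> \<delta> K" and \<omega>: "\<omega> \<in> bdry par r0"
  shows "(\<lambda>x. cmod (K x \<omega>) * m x) summable_on UNIV"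
    and "(\<Sum>\<^sub>\<infinity>x. cmod (K x \<omega>) * m x) \<le> 1 / (1 - Q) * (2 / (1 - q))"
proof -
  have finite_sums: "(\<Sum>x\<in>F. cmod (K x \<omega>) * m x) \<le> 1 / (1 - Q) * (2 / (1 - q))"
    if "finite F" for F
  proof -
    have "(\<Sum>x\<in>F. cmod (K x \<omega>) * m x) \<le> (\<Sum>x\<in>F. m x powr \<alpha> / m (conf_vb par r0 x \<omega>) powr (\<alpha> + 1)
        * min (1 / m (conf_vb par r0 x \<omega>)) (m (conf_vb par r0 x \<omega>)) * m x)"
      by (intro sum_mono mult_right_mono[OF strong_bound_le_min[OF \<delta> K \<omega>] less_imp_le[OF m_pos]])
    also have "\<dots> \<le> 1 / (1 - Q) * (2 / (1 - q))" by (rule sum_conf_weighted_le[OF \<omega> that])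
    finally show ?thesis .
  qed
  have nonneg: "0 \<le> cmod (K x \<omega>) * m x" for x using m_pos[of x] by simp
  show summable: "(\<lambda>x. cmod (K x \<omega>) * m x) summable_on UNIV"
    by (rule nonneg_bdd_above_summable_on) (use nonneg finite_sums in \<open>auto intro!: bdd_aboveI\<close>)
  show "(\<Sum>\<^sub>\<infinity>x. cmod (K x \<omega>) * m x) \<le> 1 / (1 - Q) * (2 / (1 - q))"
    by (rule infsum_le_finite_sums[OF summable]) (use finite_sums in auto)
qed

text \<open>The confluent \<open>x \<and> \<omega>\<close> is an ancestor \<open>par\<^sup>n x\<close> whose cylinder contains \<open>\<omega>\<close>, so \<open>|f|\<close> is dominated
  by \<open>\<Sum>\<^sub>n c\<^sub>n 1\<^bsub>\<partial>T(par\<^sup>n x)\<^esub>\<close>, whose integral is \<open>\<Sum>\<^sub>n c\<^sub>n m(par\<^sup>n x) \<le> \<Sum>\<^sub>n Q\<^sup>n\<close>.\<close>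

lemma integrable_if_A3_bound:
  assumes f: "f \<in> borel_measurable \<nu>"
    and bound: "\<forall>\<omega>\<in>bdry par r0. cmod (f \<omega>) \<le> m x powr \<alpha> / m (conf_vb par r0 x \<omega>) powr (\<alpha> + 1)"
  shows "integrable \<nu> f"
proof (rule integrableI_bounded[OF f])
  define c where "c n = m x powr \<alpha> / m ((par ^^ n) x) powr (\<alpha> + 1)" for n
  define A where "A n = cyl par r0 ((par ^^ n) x)" for n
  have A: "A n \<in> sets \<nu>" for n unfolding A_def by (rule sets_cyl)
  have dominated: "ennreal (norm (f \<omega>)) \<le> (\<Sum>n. ennreal (c n) * indicator (A n) \<omega>)"
    if "\<omega> \<in> space \<nu>" for \<omega>
  proof -
    have \<omega>: "\<omega> \<in> bdry par r0" using that space_eq_bdry by simp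
    define n0 where "n0 = nat (level par r0 (conf_vb par r0 x \<omega>) - level par r0 x)"
    note conf = conf_vb_props[OF \<omega>, of x, folded n0_def]
    have "norm (f \<omega>) \<le> c n0" using bound[rule_format, OF \<omega>] unfolding conf(3) c_def by simp
    then have "ennreal (norm (f \<omega>)) \<le> ennreal (c n0) * indicator (A n0) \<omega>"
      using conf(3,5) unfolding A_def by (simp add: ennreal_leI)
    also have "\<dots> \<le> (\<Sum>n. ennreal (c n) * indicator (A n) \<omega>)"
      by (rule ennreal_le_suminf)
    finally show ?thesis .
  qed
  have "(\<integral>\<^sup>+\<omega>. ennreal (norm (f \<omega>)) \<partial>\<nu>) \<le> (\<integral>\<^sup>+\<omega>. (\<Sum>n. ennreal (c n) * indicator (A n) \<omega>) \<partial>\<nu>)"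
    by (rule nn_integral_mono) (rule dominated)
  also have "\<dots> = (\<Sum>n. ennreal (c n) * emeasure \<nu> (A n))"
    using A by (simp add: nn_integral_suminf nn_integral_cmult_indicator)
  also have "\<dots> = (\<Sum>n. ennreal (c n * m ((par ^^ n) x)))"
    unfolding A_def emeasure_cyl by (subst ennreal_mult) (auto simp: c_def m_pos less_imp_le)
  also have "\<dots> \<le> (\<Sum>n. ennreal (Q ^ n))"
  proof (intro suminf_le ennreal_leI)
    show "c n * m ((par ^^ n) x) \<le> Q ^ n" for n
      using m_powr_div_ancestor_le[of x n] m_pos[of "(par ^^ n) x"] unfolding c_def
      by (simp add: le_divide_eq)
  qed auto
  also have "\<dots> = ennreal (\<Sum>n. Q ^ n)"
    by (rule suminf_ennreal2) (use Q_pos Q_less_1 in \<open>auto intro: summable_geometric\<close>)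
  also have "\<dots> < \<infinity>" by simp
  finally show "(\<integral>\<^sup>+\<omega>. ennreal (norm (f \<omega>)) \<partial>\<nu>) < \<infinity>" .
qed

lemma strong_bound_consequences:
  assumes \<delta>: "0 \<le> \<delta>" and measurable: "\<forall>x. K x \<in> borel_measurable \<nu>"
    and K: "strong_bound par r0 \<nu> \<alpha> \<delta> K"
  shows "cond_A3_with par r0 \<nu> \<alpha> K"
    and "\<forall>\<omega>\<in>bdry par r0. (\<lambda>x. cmod (K x \<omega>) * m x) summable_on UNIV \<and>
           (\<Sum>\<^sub>\<infinity>x. cmod (K x \<omega>) * m x) \<le> 1 / (1 - Q) * (2 / (1 - q))"
    and "cond_A2 par r0 \<nu> K"
    and "\<forall>x. integrable \<nu> (K x)"
proof -
  show A3: "cond_A3_with par r0 \<nu> \<alpha> K" by (rule strong_bound_imp_A3[OF \<delta> K])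
  show sums: "\<forall>\<omega>\<in>bdry par r0. (\<lambda>x. cmod (K x \<omega>) * m x) summable_on UNIV \<and>
      (\<Sum>\<^sub>\<infinity>x. cmod (K x \<omega>) * m x) \<le> 1 / (1 - Q) * (2 / (1 - q))"
    using summable_on_weighted_kernel[OF \<delta> K] by simp
  then show "cond_A2 par r0 \<nu> K"
    unfolding cond_A2_def using space_eq_bdry
    by (intro exI[of _ "1 / (1 - Q) * (2 / (1 - q))"] AE_I2) simp
  show "\<forall>x. integrable \<nu> (K x)"
    using integrable_if_A3_bound measurable A3 unfolding cond_A3_with_def by blast
qed

end

theorem mainTheorem9:
  fixes par :: "'v \<Rightarrow> 'v" and r0 :: 'v and \<nu> :: "(int \<Rightarrow> 'v) measure"
    and \<alpha> \<delta> :: real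
  assumes tree: "tree_with_end par"
    and two_succ: "\<forall>x. \<exists>y z. y \<in> successors par x \<and> z \<in> successors par x \<and> y \<noteq> z"
    and borel: "borel_on_bdry par r0 \<nu>"
    and cyl_pos: "\<forall>x. 0 < emeasure \<nu> (cyl par r0 x) \<and> emeasure \<nu> (cyl par r0 x) < \<infinity>"
    and dbl: "doubling par r0 \<nu>"
    and \<alpha>: "\<alpha> > 0" and \<delta>: "\<delta> > 0"
  shows "(\<exists>C::real. \<forall>K. (\<forall>x. K x \<in> borel_measurable \<nu>) \<and> strong_bound par r0 \<nu> \<alpha> \<delta> K \<longrightarrow>
            cond_A3_with par r0 \<nu> \<alpha> K \<and>
            (\<forall>\<omega>\<in>bdry par r0. (\<lambda>x. cmod (K x \<omega>) * m_nu par r0 \<nu> x) summable_on UNIV \<and>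
                 (\<Sum>\<^sub>\<infinity>x. cmod (K x \<omega>) * m_nu par r0 \<nu> x) \<le> C) \<and>
            cond_A2 par r0 \<nu> K \<and>
            (\<forall>x. integrable \<nu> (K x)))
       \<and> (\<exists>K. (\<forall>x. K x \<in> borel_measurable \<nu>) \<and> strong_bound par r0 \<nu> \<alpha> \<delta> K \<and>
            (\<exists>x. \<not> (AE \<omega> in \<nu>. K x \<omega> = 0)) \<and>
            (\<forall>x. (\<integral>\<omega>. K x \<omega> \<partial>\<nu>) = 0) \<and>
            class_O par r0 \<nu> K)"
proof -
  interpret tree_boundary_measure par r0 \<nu>
    using tree borel cyl_pos by unfold_locales
  obtain q where "0 < q" "q < 1" "\<forall>z. m z \<le> q * m (par z)"
    using doubling_imp_m_decay[OF dbl two_succ] by blast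
  then interpret decaying_tree_measure par r0 \<nu> q \<alpha>
    using \<alpha> by unfold_locales
  have bounds: "cond_A3_with par r0 \<nu> \<alpha> K \<and>
      (\<forall>\<omega>\<in>bdry par r0. (\<lambda>x. cmod (K x \<omega>) * m x) summable_on UNIV \<and>
         (\<Sum>\<^sub>\<infinity>x. cmod (K x \<omega>) * m x) \<le> 1 / (1 - Q) * (2 / (1 - q))) \<and>
      cond_A2 par r0 \<nu> K \<and> (\<forall>x. integrable \<nu> (K x))"
    if "\<forall>x. K x \<in> borel_measurable \<nu>" "strong_bound par r0 \<nu> \<alpha> \<delta> K" for K
    using strong_bound_consequences[OF less_imp_le[OF \<delta>] that] by blast
  obtain a b where "par a = r0" "par b = r0" "a \<noteq> b"
    using two_succ unfolding successors_def by blast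
  then obtain K where K: "\<forall>x. K x \<in> borel_measurable \<nu>" "strong_bound par r0 \<nu> \<alpha> \<delta> K"
    "\<not> (AE \<omega> in \<nu>. K r0 \<omega> = 0)" "\<forall>x. (\<integral>\<omega>. K x \<omega> \<partial>\<nu>) = 0"
    using mean_zero_kernel_exists by blast
  then have "class_O par r0 \<nu> K"
    unfolding class_O_def cond_A1_def using bounds \<alpha> by blast
  then show ?thesis using bounds K by blast
qed

end
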